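(* Let $\mathcal{T}$ be a triangulation of $C(m,2d+1)$, $v\in[m]$, and let $S,R$ be $2d$-simplices of $\mathcal{T}\backslash v$ (with $S\cap R$ of size $2d$). Then $S\cap R$ cannot be both a lower facet of $S$ and a lower facet of $R$; similarly $S\cap R$ cannot be both an upper facet of $S$ and an upper facet of $R$.
   Context: $C(V,n)$ is the cyclic polytope on a finite ordered set $V$ (convex hull of $(t_v,\dots,t_v^n)$, $t_v$ increasing); $C(m,n)=C([m],n)$; a triangulation of it is a set of $(n+1)$-subsets whose geometric simplices form a simplicial complex covering it. For a triangulation $\mathcal{T}$ of $C(m,2d+1)$ and $v\in[m]$, $\mathcal{T}\backslash v=\{S\setminus\{v\}: S\in\mathcal{T},\ v\in S\}$, a set of $2d$-simplices ($(2d+1)$-subsets of $[m]\setminus\{v\}$). Let $[m]_{v+}=\{1,\dots,v-1,x,y,v+1,\dots,m\}$ ordered with $v-1<x<y<v+1$. The circuits of $C(V,2d+1)$ are the pairs $(Z,Z')$ of disjoint subsets with, after listing $Z\cup Z'$ increasingly as $c_0<c_1<\dots<c_{2d+2}$, one of $Z,Z'$ equal to $\{c_1,c_3,\dots,c_{2d+1}\}$ and the other to $\{c_0,c_2,\dots,c_{2d+2}\}$. For a $2d$-simplex $S$ of $\mathcal{T}\backslash v$, the set $S\cup\{x,y\}$ has $2d+3$ elements and so splits uniquely into the two halves of a circuit of $C([m]_{v+},2d+1)$; since $x,y$ are adjacent they lie in different halves, and we write these halves as $S_-\cup\{x\}$ and $S_+\cup\{y\}$ with $S=S_-\sqcup S_+$.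 For $s\in S$, $S\setminus\{s\}$ is a lower facet of $S$ if $s\in S_+$ and an upper facet of $S$ if $s\in S_-$. *)

theory Defs
  imports "HOL-Analysis.Analysis"
begin

(* Point of the moment curve in R^n, coordinates indexed by a finite linearly ordered
   type 'n with |'n| = n; the k-th coordinate (k = 1..n, in the order of 'n) is t^k. *)
definition moment_pt :: "real \<Rightarrow> real ^ ('n::{finite,linorder})" where
  "moment_pt s = (\<chi> i. s ^ card {j. j \<le> i})"

definition is_triangulation ::
  "(nat \<Rightarrow> 'a::euclidean_space) \<Rightarrow> nat \<Rightarrow> nat set \<Rightarrow> nat set set \<Rightarrow> bool" where
  "is_triangulation p k V T \<longleftrightarrow>
     (\<forall>S\<in>T. S \<subseteq> V \<and> card S = k + 1 \<and> \<not> affine_dependent (p ` S)) \<and>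
     (\<Union>S\<in>T. convex hull (p ` S)) = convex hull (p ` V) \<and>
     (\<forall>S\<in>T. \<forall>S'\<in>T. convex hull (p ` S) \<inter> convex hull (p ` S') = convex hull (p ` (S \<inter> S')))"

definition cyclic_triangulation ::
  "'n::{finite,linorder} itself \<Rightarrow> (nat \<Rightarrow> real) \<Rightarrow> nat \<Rightarrow> nat set set \<Rightarrow> bool" where
  "cyclic_triangulation (_::'n::{finite,linorder} itself) t m T \<longleftrightarrow>
     is_triangulation (\<lambda>u. (moment_pt (t u) :: real ^ 'n::{finite,linorder})) (card (UNIV :: 'n::{finite,linorder} set)) {1..m} T"

definition tri_del :: "nat set set \<Rightarrow> nat \<Rightarrow> nat set set" where
  "tri_del T v = {S - {v} | S. S \<in> T \<and> v \<in> S}"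

definition even_half :: "nat set \<Rightarrow> nat set" where
  "even_half A = {sorted_list_of_set A ! i | i. i < card A \<and> even i}"
definition odd_half :: "nat set \<Rightarrow> nat set" where
  "odd_half A = {sorted_list_of_set A ! i | i. i < card A \<and> odd i}"

(* The ordered set [m]_{v+} modelled inside nat: u (u \<noteq> v) is represented by 4u,
   x by 4v-1 and y by 4v+1, so that v-1 < x < y < v+1. *)
definition vx :: "nat \<Rightarrow> nat" where "vx v = 4 * v - 1"
definition vy :: "nat \<Rightarrow> nat" where "vy v = 4 * v + 1"
definition vplus :: "nat \<Rightarrow> nat \<Rightarrow> nat set" where
  "vplus m v = (\<lambda>u. 4 * u) ` ({1..m} - {v}) \<union> {vx v, vy v}"

definition is_circuit :: "nat set \<Rightarrow> nat \<Rightarrow> nat set \<Rightarrow> nat set \<Rightarrow> bool" where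
  "is_circuit V d Z Z' \<longleftrightarrow> Z \<subseteq> V \<and> Z' \<subseteq> V \<and> Z \<inter> Z' = {} \<and>
     card (Z \<union> Z') = 2 * d + 3 \<and>
     ({Z, Z'} = {odd_half (Z \<union> Z'), even_half (Z \<union> Z')})"

(* For a 2d-simplex S of T\v: the circuit of C([m]_{v+},2d+1) supported on S \<union> {x,y},
   with halves S_- \<union> {x} and S_+ \<union> {y}. *)
definition S_minus :: "nat \<Rightarrow> nat \<Rightarrow> nat \<Rightarrow> nat set \<Rightarrow> nat set" where
  "S_minus m d v S = {s \<in> S. \<exists>Z Z'. is_circuit (vplus m v) d Z Z' \<and>
      Z \<union> Z' = (\<lambda>u. 4 * u) ` S \<union> {vx v, vy v} \<and> vx v \<in> Z \<and> 4 * s \<in> Z}"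
definition S_plus :: "nat \<Rightarrow> nat \<Rightarrow> nat \<Rightarrow> nat set \<Rightarrow> nat set" where
  "S_plus m d v S = {s \<in> S. \<exists>Z Z'. is_circuit (vplus m v) d Z Z' \<and>
      Z \<union> Z' = (\<lambda>u. 4 * u) ` S \<union> {vx v, vy v} \<and> vy v \<in> Z' \<and> 4 * s \<in> Z'}"

definition lower_facet :: "nat \<Rightarrow> nat \<Rightarrow> nat \<Rightarrow> nat set \<Rightarrow> nat set \<Rightarrow> bool" where
  "lower_facet m d v S F \<longleftrightarrow> (\<exists>s \<in> S_plus m d v S. F = S - {s})"
definition upper_facet :: "nat \<Rightarrow> nat \<Rightarrow> nat \<Rightarrow> nat set \<Rightarrow> nat set \<Rightarrow> bool" where
  "upper_facet m d v S F \<longleftrightarrow> (\<exists>s \<in> S_minus m d v S. F = S - {s})"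

end

theory Submission
  imports Defs "HOL-Computational_Algebra.Polynomial"
begin

(* Write S = F \<union> {a} and R = F \<union> {b} with F = S \<inter> R.  Then F \<union> {v,a} and F \<union> {v,b} are
   simplices of the triangulation sharing the facet W = F \<union> {v}, so they lie on opposite sides
   of the hyperplane spanned by the moment points of W.  That hyperplane is the zero set of the
   affine functional which restricts to Q(s) = \<Prod>w\<in>W. (s - t_w) on the moment curve, so the side
   of the moment point of u is the parity of #{w \<in> W. u < w}.  On the other hand, the circuit on
   S \<union> {x,y} alternates, so s \<in> S_+ forces the positions of s and v in S to have different
   parity, and s \<in> S_- forces them to have the same parity.  Counting positions, the side of u is
   determined by this parity datum and the position of v in F, so two lower (or two upper)
   facets would put a and b on the same side. *)

section \<open>Positions in the circuits of the split polytope\<close>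

lemma card_less_nth_sorted_list_of_set:
  fixes A :: "'a::linorder set"
  assumes "finite A" "i < card A"
  shows "card {w\<in>A. w < sorted_list_of_set A ! i} = i"
proof -
  let ?xs = "sorted_list_of_set A"
  have xs: "sorted_wrt (<) ?xs" "length ?xs = card A" "set ?xs = A"
    using assms(1) by auto
  have "{w\<in>A. w < ?xs ! i} = (!) ?xs ` {..<i}"
  proof (intro set_eqI iffI)
    fix w assume "w \<in> {w\<in>A. w < ?xs ! i}"
    then have "w \<in> set ?xs" "w < ?xs ! i" using xs(3) by auto
    then obtain j where "j < card A" "w = ?xs ! j" "?xs ! j < ?xs ! i"
      using xs(2) by (auto simp: in_set_conv_nth)
    moreover have "j < i"
    proof (rule ccontr)
      assume "\<not> j < i"
      then have "?xs ! i \<le> ?xs ! j"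
        using sorted_nth_mono[OF sorted_sorted_list_of_set, of i j A] xs(2) \<open>j < card A\<close> by simp
      then show False using \<open>?xs ! j < ?xs ! i\<close> by simp
    qed
    ultimately show "w \<in> (!) ?xs ` {..<i}" by blast
  next
    fix w assume "w \<in> (!) ?xs ` {..<i}"
    then obtain j where "j < i" "w = ?xs ! j" by blast
    moreover have "?xs ! j \<in> A" "?xs ! j < ?xs ! i"
      using \<open>j < i\<close> assms(2) xs nth_mem[of j ?xs] sorted_wrt_nth_less[OF xs(1) \<open>j < i\<close>] by simp_all
    ultimately show "w \<in> {w\<in>A. w < ?xs ! i}" by simp
  qed
  moreover have "inj_on ((!) ?xs) {..<i}"
    using xs assms(2) by (simp add: inj_on_def nth_eq_iff_index_eq)
  ultimately show ?thesis by (simp add: card_image)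
qed

lemma even_card_less_iff_same_half:
  assumes "finite A" "Y = odd_half A \<or> Y = even_half A" "z1 \<in> Y" "z2 \<in> Y"
  shows "even (card {w\<in>A. w < z1}) \<longleftrightarrow> even (card {w\<in>A. w < z2})"
  using assms unfolding odd_half_def even_half_def by (auto simp: card_less_nth_sorted_list_of_set)

lemma is_circuit_even_card_less_iff:
  assumes "is_circuit V d Z Z'" "Y = Z \<or> Y = Z'" "z1 \<in> Y" "z2 \<in> Y"
  shows "even (card {w\<in>Z \<union> Z'. w < z1}) \<longleftrightarrow> even (card {w\<in>Z \<union> Z'. w < z2})"
proof (rule even_card_less_iff_same_half[OF _ _ assms(3,4)])
  show "finite (Z \<union> Z')"
    using assms(1) card.infinite unfolding is_circuit_def by fastforce
  show "Y = odd_half (Z \<union> Z') \<or> Y = even_half (Z \<union> Z')"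
    using assms(1,2) unfolding is_circuit_def by (auto simp: doubleton_eq_iff)
qed

abbreviation insert_xy :: "nat \<Rightarrow> nat set \<Rightarrow> nat set" where
  "insert_xy v S \<equiv> (\<lambda>u. 4 * u) ` S \<union> {vx v, vy v}"

lemma card_less_insert_xy:
  assumes "finite S" "1 \<le> v"
  shows "card {w\<in>insert_xy v S. w < z} = card {s\<in>S. 4 * s < z} + card {w\<in>{vx v, vy v}. w < z}"
proof -
  have "{w\<in>insert_xy v S. w < z} = (\<lambda>u. 4 * u) ` {s\<in>S. 4 * s < z} \<union> {w\<in>{vx v, vy v}. w < z}"
    by auto
  moreover have "(\<lambda>u. 4 * u) ` {s\<in>S. 4 * s < z} \<inter> {w\<in>{vx v, vy v}. w < z} = {}"
    using assms(2) by (auto simp: vx_def vy_def) presburger+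
  moreover have "card ((\<lambda>u. 4 * u) ` {s\<in>S. 4 * s < z}) = card {s\<in>S. 4 * s < z}"
    by (rule card_image) (auto simp: inj_on_def)
  ultimately show ?thesis using assms(1) by (simp add: card_Un_disjoint)
qed

lemma even_card_less_insert_xy_times_4:
  assumes "finite S" "1 \<le> v" "a \<noteq> v"
  shows "even (card {w\<in>insert_xy v S. w < 4 * a}) \<longleftrightarrow> even (card {s\<in>S. s < a})"
proof -
  have "{w\<in>{vx v, vy v}. w < 4 * a} = (if v < a then {vx v, vy v} else {})"
    using assms(2,3) by (auto simp: vx_def vy_def)
  then have "card {w\<in>{vx v, vy v}. w < 4 * a} = (if v < a then 2 else 0)"
    by (simp add: vx_def vy_def)
  moreover have "{s\<in>S. 4 * s < 4 * a} = {s\<in>S. s < a}" by auto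
  ultimately show ?thesis using card_less_insert_xy[OF assms(1,2), of "4 * a"] by simp
qed

lemma card_less_insert_xy_vx:
  assumes "finite S" "1 \<le> v" "v \<notin> S"
  shows "card {w\<in>insert_xy v S. w < vx v} = card {s\<in>S. s < v}"
proof -
  have "{s\<in>S. 4 * s < vx v} = {s\<in>S. s < v}" using assms(2,3) by (auto simp: vx_def)
  moreover have "{w\<in>{vx v, vy v}. w < vx v} = {}" by (auto simp: vx_def vy_def)
  ultimately show ?thesis using card_less_insert_xy[OF assms(1,2)] by simp
qed

lemma card_less_insert_xy_vy:
  assumes "finite S" "1 \<le> v" "v \<notin> S"
  shows "card {w\<in>insert_xy v S. w < vy v} = card {s\<in>S. s < v} + 1"
proof -
  have "4 * s < vy v \<longleftrightarrow> s < v" if "s \<in> S" for s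
  proof -
    have "s \<noteq> v" using that assms(3) by blast
    then show ?thesis unfolding vy_def by presburger
  qed
  then have "{s\<in>S. 4 * s < vy v} = {s\<in>S. s < v}" by auto
  moreover have "{w\<in>{vx v, vy v}. w < vy v} = {vx v}" using assms(2) by (auto simp: vx_def vy_def)
  ultimately show ?thesis using card_less_insert_xy[OF assms(1,2)] by simp
qed

lemma S_plus_parity:
  assumes "a \<in> S_plus m d v S" "finite S" "v \<notin> S" "1 \<le> v"
  shows "even (card {s\<in>S. s < a}) \<longleftrightarrow> odd (card {s\<in>S. s < v})"
proof -
  obtain Z Z' where circuit: "is_circuit (vplus m v) d Z Z'" and support: "Z \<union> Z' = insert_xy v S"
    and "vy v \<in> Z'" "4 * a \<in> Z'"
    using assms(1) unfolding S_plus_def by blast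
  then have "even (card {w\<in>insert_xy v S. w < 4 * a}) \<longleftrightarrow> even (card {w\<in>insert_xy v S. w < vy v})"
    using is_circuit_even_card_less_iff[OF circuit, of Z'] by (simp only: support) blast
  moreover have "a \<noteq> v" using assms(1,3) unfolding S_plus_def by blast
  ultimately show ?thesis
    using even_card_less_insert_xy_times_4[OF assms(2,4)] card_less_insert_xy_vy[OF assms(2,4,3)] by simp
qed

lemma S_minus_parity:
  assumes "a \<in> S_minus m d v S" "finite S" "v \<notin> S" "1 \<le> v"
  shows "even (card {s\<in>S. s < a}) \<longleftrightarrow> even (card {s\<in>S. s < v})"
proof -
  obtain Z Z' where circuit: "is_circuit (vplus m v) d Z Z'" and support: "Z \<union> Z' = insert_xy v S"
    and "vx v \<in> Z" "4 * a \<in> Z"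
    using assms(1) unfolding S_minus_def by blast
  then have "even (card {w\<in>insert_xy v S. w < 4 * a}) \<longleftrightarrow> even (card {w\<in>insert_xy v S. w < vx v})"
    using is_circuit_even_card_less_iff[OF circuit, of Z] by (simp only: support) blast
  moreover have "a \<noteq> v" using assms(1,3) unfolding S_minus_def by blast
  ultimately show ?thesis
    using even_card_less_insert_xy_times_4[OF assms(2,4)] card_less_insert_xy_vx[OF assms(2,4,3)] by simp
qed

section \<open>Side of the hyperplane through the common facet\<close>

lemma card_insert_Collect:
  assumes "finite F" "a \<notin> F"
  shows "card {w\<in>insert a F. P w} = card {w\<in>F. P w} + (if P a then 1 else 0)"
proof -
  have "{w\<in>insert a F. P w} = (if P a then insert a {w\<in>F. P w} else {w\<in>F. P w})" by auto
  then show ?thesis using assms by simp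
qed

lemma card_greater_add_card_less:
  fixes W :: "'a::linorder set"
  assumes "finite W" "x \<notin> W"
  shows "card {w\<in>W. x < w} + card {w\<in>W. w < x} = card W"
proof -
  have "{w\<in>W. x < w} \<union> {w\<in>W. w < x} = W" using assms(2) by auto (metis linorder_less_linear)
  moreover have "{w\<in>W. x < w} \<inter> {w\<in>W. w < x} = {}" by auto
  ultimately show ?thesis using assms(1) card_Un_disjoint[of "{w\<in>W. x < w}" "{w\<in>W. w < x}"] by simp
qed

text \<open>The side of x (the parity on the left, with W = F \<union> {v}) in terms of the positions of x
  and v in the simplex F \<union> {x} of the link, which is what membership in S_+ or S_- controls.\<close>

lemma even_card_greater_insert_iff:
  fixes F :: "nat set"
  assumes "finite F" "even (card F)" "v \<notin> F" "x \<notin> F" "x \<noteq> v"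
  shows "even (card {w\<in>insert v F. x < w}) \<longleftrightarrow>
    ((even (card {s\<in>insert x F. s < x}) \<longleftrightarrow> even (card {s\<in>insert x F. s < v}))
       \<longleftrightarrow> even (card {w\<in>F. w < v}))"
proof -
  have "card {w\<in>insert v F. x < w} + card {w\<in>insert v F. w < x} = card F + 1"
    using card_greater_add_card_less[of "insert v F" x] assms by simp
  moreover have "card {w\<in>insert v F. w < x} = card {w\<in>F. w < x} + (if v < x then 1 else 0)"
    using card_insert_Collect[OF assms(1,3)] .
  moreover have "card {s\<in>insert x F. s < x} = card {w\<in>F. w < x}"
    using card_insert_Collect[OF assms(1,4)] by simp
  moreover have "card {s\<in>insert x F. s < v} = card {w\<in>F. w < v} + (if x < v then 1 else 0)"
    using card_insert_Collect[OF assms(1,4)] .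
  ultimately show ?thesis using assms(2,5) by (cases "x < v") (simp_all, presburger+)
qed

lemma sgn_prod_diff_strict_mono_on:
  fixes t :: "'a::linorder \<Rightarrow> 'b::linordered_idom"
  assumes "strict_mono_on D t" "finite W" "W \<subseteq> D" "a \<in> D" "a \<notin> W"
  shows "sgn (\<Prod>w\<in>W. t a - t w) = (-1) ^ card {w\<in>W. a < w}"
  using assms(2-5)
proof (induction W rule: finite_induct)
  case (insert x W)
  have "sgn (t a - t x) = (if a < x then -1 else 1)"
    using assms(1) insert.prems by (auto simp: neq_iff dest: strict_mono_onD)
  then show ?case
    using insert card_insert_Collect[OF insert.hyps(1,2), of "\<lambda>w. a < w"] by (simp add: sgn_mult)
qed simp

section \<open>Simplices sharing a facet lie on opposite sides\<close>

lemma inner_affine_combination: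
  fixes n :: "'a::real_inner"
  assumes "sum u X = 1"
  shows "inner n (\<Sum>x\<in>X. u x *\<^sub>R x) + c = (\<Sum>x\<in>X. u x * (inner n x + c))"
proof -
  have "(\<Sum>x\<in>X. u x * c) = c" using assms by (simp add: sum_distrib_right[symmetric])
  then show ?thesis by (simp add: inner_sum_right distrib_left sum.distrib)
qed

lemma convex_hull_step_from_centroid:
  fixes y :: "'a::real_vector"
  assumes "finite P" "P \<noteq> {}" "pb \<notin> P"
    and "sum u (insert pb P) = 1" "y = (\<Sum>x\<in>insert pb P. u x *\<^sub>R x)" "0 \<le> u pb"
  obtains \<theta> where "0 < \<theta>" "\<theta> \<le> 1"
    "\<theta> *\<^sub>R y + (1 - \<theta>) *\<^sub>R (\<Sum>x\<in>P. (1 / real (card P)) *\<^sub>R x) \<in> convex hull (insert pb P)"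
proof -
  define N where "N = real (card P)"
  define M where "M = (\<Sum>x\<in>P. \<bar>u x\<bar>)"
  \<comment> \<open>small enough that the weights \<theta> * u x + (1 - \<theta>) / N on P stay nonnegative\<close>
  define \<theta> where "\<theta> = 1 / (1 + N * M)"
  have "0 < N" "0 \<le> M" using assms(1,2) by (auto simp: N_def M_def card_gt_0_iff sum_nonneg)
  then have "0 < 1 + N * M" by (simp add: add_pos_nonneg)
  then have \<theta>: "0 < \<theta>" "\<theta> \<le> 1" "1 - \<theta> = \<theta> * M * N"
    using \<open>0 \<le> M\<close> \<open>0 < N\<close> by (auto simp: \<theta>_def field_simps)
  define e where "e x = (if x = pb then 0 else 1 / N)" for x
  define w where "w x = \<theta> * u x + (1 - \<theta>) * e x" for x
  have e_P: "e x = 1 / N" if "x \<in> P" for x using that assms(3) by (auto simp: e_def)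
  have e: "sum e (insert pb P) = 1" "(\<Sum>x\<in>insert pb P. e x *\<^sub>R x) = (\<Sum>x\<in>P. (1 / N) *\<^sub>R x)"
    using assms(1,3) \<open>0 < N\<close> sum.cong[OF refl e_P] sum.cong[OF refl, of P "\<lambda>x. e x *\<^sub>R x"] e_P
    by (auto simp: e_def[of pb] N_def)
  have "0 \<le> w x" if "x \<in> insert pb P" for x
  proof (cases "x = pb")
    case False
    then have "x \<in> P" using that by simp
    then have "- M \<le> u x" unfolding M_def using assms(1) member_le_sum[of x P "\<lambda>x. \<bar>u x\<bar>"] by simp
    then have "\<theta> * (- M) \<le> \<theta> * u x" using \<theta>(1) by (intro mult_left_mono) auto
    then show ?thesis using False \<theta>(3) \<open>0 < N\<close> by (simp add: w_def e_def)
  qed (use assms(6) \<theta> in \<open>simp add: w_def e_def\<close>)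
  moreover have "sum w (insert pb P) = 1"
    using assms(4) e(1) by (simp add: w_def sum.distrib sum_distrib_left[symmetric])
  moreover have "(\<Sum>x\<in>insert pb P. w x *\<^sub>R x) =
      \<theta> *\<^sub>R (\<Sum>x\<in>insert pb P. u x *\<^sub>R x) + (1 - \<theta>) *\<^sub>R (\<Sum>x\<in>insert pb P. e x *\<^sub>R x)"
    by (simp add: w_def scaleR_add_left sum.distrib scaleR_sum_right)
  then have "(\<Sum>x\<in>insert pb P. w x *\<^sub>R x) = \<theta> *\<^sub>R y + (1 - \<theta>) *\<^sub>R (\<Sum>x\<in>P. (1 / N) *\<^sub>R x)"
    by (simp only: assms(5) e(2))
  ultimately show ?thesis
    using that[OF \<theta>(1,2)] assms(1) unfolding N_def convex_hull_finite[OF finite_insert[THEN iffD2, OF assms(1)]]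
    by blast
qed

lemma common_facet_opposite_sides:
  fixes n pa pb :: "'a::euclidean_space"
  assumes "finite P" "P \<noteq> {}" "\<And>x. x \<in> P \<Longrightarrow> inner n x + c = 0"
    and "affine hull (insert pb P) = UNIV"
    and "convex hull (insert pa P) \<inter> convex hull (insert pb P) = convex hull P"
  shows "(inner n pa + c) * (inner n pb + c) \<le> 0"
proof (rule ccontr)
  define f where "f x = inner n x + c" for x
  assume "\<not> ?thesis"
  then have same_side: "0 < f pa * f pb" by (simp add: f_def)
  have f_hull: "f x = 0" if "x \<in> convex hull P" for x
  proof -
    have "convex hull P \<subseteq> {x. inner n x = - c}"
      using assms(3) convex_hyperplane[of n "- c"] by (intro hull_minimal) (auto simp: eq_neg_iff_add_eq_0)
    then show ?thesis using that by (auto simp: f_def)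
  qed
  have "pb \<notin> P" using same_side f_hull hull_inc by fastforce
  have "pa \<in> affine hull (insert pb P)" using assms(4) by simp
  then obtain u where u: "sum u (insert pb P) = 1" "pa = (\<Sum>x\<in>insert pb P. u x *\<^sub>R x)"
    unfolding affine_hull_finite[OF finite_insert[THEN iffD2, OF assms(1)]] by auto
  have "f pa = (\<Sum>x\<in>insert pb P. u x * f x)"
    unfolding f_def u(2) by (rule inner_affine_combination[OF u(1)])
  also have "\<dots> = u pb * f pb"
    using assms(1,3) \<open>pb \<notin> P\<close> by (simp add: f_def)
  finally have "0 < u pb * (f pb * f pb)" using same_side by (simp add: mult.assoc)
  then have "0 < u pb" by (metis zero_less_mult_iff not_square_less_zero)
  \<comment> \<open>?q lies in both simplices, but off the hyperplane\<close>
  obtain \<theta> where \<theta>: "0 < \<theta>" "\<theta> \<le> 1"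
    and q_pb: "\<theta> *\<^sub>R pa + (1 - \<theta>) *\<^sub>R (\<Sum>x\<in>P. (1 / real (card P)) *\<^sub>R x) \<in> convex hull (insert pb P)"
      (is "?q \<in> _")
    using convex_hull_step_from_centroid[OF assms(1,2) \<open>pb \<notin> P\<close> u less_imp_le[OF \<open>0 < u pb\<close>]]
    by blast
  have centroid: "(\<Sum>x\<in>P. (1 / real (card P)) *\<^sub>R x) \<in> convex hull P"
    using assms(1,2) unfolding convex_hull_finite[OF assms(1)]
    by (intro CollectI exI[of _ "\<lambda>_. 1 / real (card P)"]) (simp add: card_gt_0_iff)
  then have "?q \<in> convex hull (insert pa P)"
    using \<theta> hull_mono[of P "insert pa P"] hull_inc[of pa "insert pa P"]
    by (intro convexD[OF convex_convex_hull]) auto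
  then have "f ?q = 0" using q_pb assms(5) f_hull by blast
  moreover have "f ?q = \<theta> * f pa + (1 - \<theta>) * f (\<Sum>x\<in>P. (1 / real (card P)) *\<^sub>R x)"
    by (simp add: f_def inner_add_right algebra_simps)
  ultimately show False using \<theta>(1) same_side f_hull[OF centroid] by simp
qed

section \<open>Affine functionals from polynomials on the moment curve\<close>

lemma bij_betw_card_le_UNIV:
  "bij_betw (\<lambda>i::'n::{finite,linorder}. card {j. j \<le> i}) UNIV {1..CARD('n)}"
proof -
  let ?r = "\<lambda>i::'n. card {j. j \<le> i}"
  have "strict_mono ?r"
  proof (rule strict_monoI)
    fix i i' :: 'n assume "i < i'"
    then have "{j. j \<le> i} \<subset> {j. j \<le> i'}" by (auto intro: order.trans dest: leD)
    then show "?r i < ?r i'" by (simp add: psubset_card_mono)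
  qed
  then have "inj ?r" by (rule strict_mono_imp_inj_on)
  moreover have "?r ` UNIV \<subseteq> {1..CARD('n)}"
    by (auto simp: Suc_le_eq card_gt_0_iff card_mono)
  ultimately show ?thesis
    by (simp add: bij_betw_def card_image card_subset_eq)
qed

definition moment_normal :: "real poly \<Rightarrow> real ^ 'n::{finite,linorder}" where
  "moment_normal Q = (\<chi> i. coeff Q (card {j. j \<le> i}))"

lemma inner_moment_normal_moment_pt:
  assumes "degree Q \<le> CARD('n)"
  shows "inner (moment_normal Q :: real ^ 'n::{finite,linorder}) (moment_pt s) + coeff Q 0 = poly Q s"
proof -
  have "inner (moment_normal Q) (moment_pt s :: real ^ ('n::{finite,linorder})) + coeff Q 0
      = (\<Sum>k\<in>insert 0 {1..CARD('n)}. coeff Q k * s ^ k)"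
    using sum.reindex_bij_betw[OF bij_betw_card_le_UNIV, of "\<lambda>k. coeff Q k * s ^ k"]
    by (simp add: inner_vec_def moment_normal_def moment_pt_def)
  also have "insert 0 {1..CARD('n)} = {..CARD('n)}" by auto
  also have "(\<Sum>k\<le>CARD('n). coeff Q k * s ^ k) = (\<Sum>k\<le>degree Q. coeff Q k * s ^ k)"
    by (rule sum.mono_neutral_right) (use assms in \<open>auto simp: coeff_eq_0\<close>)
  also have "\<dots> = poly Q s"
    by (simp add: poly_altdef)
  finally show ?thesis .
qed

lemma inj_moment_pt: "inj (moment_pt :: real \<Rightarrow> real ^ 'n::{finite,linorder})"
proof (rule injI)
  have "1 \<in> (\<lambda>i::'n::{finite,linorder}. card {j. j \<le> i}) ` UNIV"
    using bij_betw_imp_surj_on[OF bij_betw_card_le_UNIV[where 'n='n]] by simp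
  then obtain i0 :: "'n::{finite,linorder}" where "card {j. j \<le> i0} = 1" by (auto simp del: One_nat_def)
  fix s s' assume "(moment_pt s :: real ^ ('n::{finite,linorder})) = moment_pt s'"
  then have "moment_pt s $ i0 = (moment_pt s' :: real ^ ('n::{finite,linorder})) $ i0" by simp
  then show "s = s'" using \<open>card {j. j \<le> i0} = 1\<close> by (simp add: moment_pt_def)
qed

lemma cyclic_triangulation_simplex:
  assumes "cyclic_triangulation TYPE('n::{finite,linorder}) t m T" "S \<in> T"
  shows "S \<subseteq> {1..m}" "card S = CARD('n) + 1"
    "\<not> affine_dependent ((\<lambda>u. moment_pt (t u) :: real ^ ('n::{finite,linorder})) ` S)"
  using assms unfolding cyclic_triangulation_def is_triangulation_def by simp_all

lemma cyclic_triangulation_inter: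
  assumes "cyclic_triangulation TYPE('n::{finite,linorder}) t m T" "S \<in> T" "S' \<in> T"
  shows "convex hull ((\<lambda>u. moment_pt (t u) :: real ^ ('n::{finite,linorder})) ` S)
           \<inter> convex hull ((\<lambda>u. moment_pt (t u)) ` S')
         = convex hull ((\<lambda>u. moment_pt (t u)) ` (S \<inter> S'))"
  using assms unfolding cyclic_triangulation_def is_triangulation_def by simp

lemma cyclic_triangulation_common_facet_parity:
  fixes t :: "nat \<Rightarrow> real"
  assumes "strict_mono_on {1..m} t" "cyclic_triangulation TYPE('n::{finite,linorder}) t m T"
    and "insert a W \<in> T" "insert b W \<in> T" "a \<notin> W" "b \<notin> W" "a \<noteq> b"
  shows "even (card {w\<in>W. a < w}) \<noteq> even (card {w\<in>W. b < w})"
proof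
  assume same_parity: "even (card {w\<in>W. a < w}) = even (card {w\<in>W. b < w})"
  define p where "p = (\<lambda>u. moment_pt (t u) :: real ^ ('n::{finite,linorder}))"
  note simplex_a = cyclic_triangulation_simplex[OF assms(2,3), folded p_def]
  note simplex_b = cyclic_triangulation_simplex[OF assms(2,4), folded p_def]
  have "finite (insert a W)" using simplex_a(2) by (intro card_ge_0_finite) simp
  then have "finite W" by simp
  then have card_W: "card W = CARD('n)" using simplex_a(2) assms(5) by simp
  define Q where "Q = (\<Prod>w\<in>W. [:- t w, 1:])"
  have "degree Q \<le> CARD('n)"
    unfolding Q_def using degree_prod_sum_le[OF \<open>finite W\<close>, of "\<lambda>w. [:- t w, 1:]"] card_W by simp
  define h where "h x = inner (moment_normal Q :: real ^ ('n::{finite,linorder})) x + coeff Q 0" for x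
  have h_p: "h (p u) = (\<Prod>w\<in>W. t u - t w)" for u
    using inner_moment_normal_moment_pt[OF \<open>degree Q \<le> CARD('n)\<close>]
    by (simp add: h_def p_def Q_def poly_prod)
  have sgn_h: "sgn (h (p x)) = (-1) ^ card {w\<in>W. x < w}" if "x \<in> {a, b}" for x
    unfolding h_p using that assms(5,6) simplex_a(1) simplex_b(1) \<open>finite W\<close>
    by (intro sgn_prod_diff_strict_mono_on[OF assms(1)]) auto
  have "sgn (h (p a) * h (p b)) = 1"
    using same_parity by (simp add: sgn_mult sgn_h power_add[symmetric])
  then have "0 < h (p a) * h (p b)" by (simp add: sgn_1_pos)
  moreover have "h (p a) * h (p b) \<le> 0"
    unfolding h_def
  proof (rule common_facet_opposite_sides[where P = "p ` W"])
    show "finite (p ` W)" "p ` W \<noteq> {}" using \<open>finite W\<close> card_W by auto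
    show "inner (moment_normal Q) x + coeff Q 0 = 0" if "x \<in> p ` W" for x
      using that h_p \<open>finite W\<close> by (auto simp: h_def)
    have "inj_on p {1..m}"
      using comp_inj_on[OF strict_mono_on_imp_inj_on[OF assms(1)] inj_on_subset[OF inj_moment_pt subset_UNIV]]
      by (simp add: p_def comp_def)
    then have "card (p ` insert b W) = CARD('n) + 1"
      using simplex_b(1,2) card_image[OF inj_on_subset] by metis
    then have "aff_dim (p ` insert b W) = DIM(real ^ ('n::{finite,linorder}))"
      using aff_dim_affine_independent[OF simplex_b(3)] by simp
    then have "affine hull (p ` insert b W) = UNIV" by (rule aff_dim_eq_full[THEN iffD1])
    then show "affine hull (insert (p b) (p ` W)) = UNIV" by simp
    have "insert a W \<inter> insert b W = W" using assms(5-7) by auto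
    then show "convex hull (insert (p a) (p ` W)) \<inter> convex hull (insert (p b) (p ` W)) = convex hull (p ` W)"
      using cyclic_triangulation_inter[OF assms(2-4), folded p_def] by simp
  qed
  ultimately show False by simp
qed

lemma tri_del_simplex:
  assumes "cyclic_triangulation TYPE('n::{finite,linorder}) t m T" "S \<in> tri_del T v"
  shows "insert v S \<in> T" "v \<notin> S" "finite S" "card S = CARD('n)"
proof -
  obtain S1 where "S1 \<in> T" "v \<in> S1" "S = S1 - {v}" using assms(2) unfolding tri_del_def by blast
  then show "insert v S \<in> T" "v \<notin> S" by (auto simp: insert_absorb)
  then have "card (insert v S) = CARD('n) + 1" using cyclic_triangulation_simplex(2)[OF assms(1)] by blast
  then have "finite (insert v S)" by (intro card_ge_0_finite) simp
  then show "finite S" by simp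
  then show "card S = CARD('n)" using \<open>card (insert v S) = CARD('n) + 1\<close> \<open>v \<notin> S\<close> by simp
qed

lemma tri_del_common_facet_parity:
  fixes t :: "nat \<Rightarrow> real"
  assumes "CARD('n::{finite,linorder}) = 2 * d + 1" "strict_mono_on {1..m} t"
    and "cyclic_triangulation TYPE('n) t m T"
    and "S \<in> tri_del T v" "R \<in> tri_del T v" "card (S \<inter> R) = 2 * d"
    and "a \<in> S" "S \<inter> R = S - {a}" "b \<in> R" "S \<inter> R = R - {b}"
  shows "(even (card {s\<in>S. s < a}) \<longleftrightarrow> even (card {s\<in>S. s < v}))
     \<noteq> (even (card {s\<in>R. s < b}) \<longleftrightarrow> even (card {s\<in>R. s < v}))"
proof -
  define F where "F = S \<inter> R"
  note S = tri_del_simplex[OF assms(3,4)] and R = tri_del_simplex[OF assms(3,5)]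
  have F: "S = insert a F" "R = insert b F" "a \<notin> F" "b \<notin> F" "v \<notin> F" "finite F"
    using assms(7-10) S(2,3) unfolding F_def by auto
  have "a \<noteq> b" using F(1,2) S(4) assms(1,6) unfolding F_def by force
  have "a \<noteq> v" "b \<noteq> v" using S(2) R(2) assms(7,9) by auto
  have "insert a (insert v F) \<in> T" "insert b (insert v F) \<in> T"
    using S(1) R(1) F(1,2) by (simp_all add: insert_commute)
  then have opposite: "even (card {w\<in>insert v F. a < w}) \<noteq> even (card {w\<in>insert v F. b < w})"
    by (rule cyclic_triangulation_common_facet_parity[OF assms(2,3)])
      (use F(3-5) \<open>a \<noteq> b\<close> \<open>a \<noteq> v\<close> \<open>b \<noteq> v\<close> in auto)
  have "even (card F)" using assms(6) unfolding F_def by simp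
  have "even (card {w\<in>insert v F. a < w}) \<longleftrightarrow>
      ((even (card {s\<in>S. s < a}) \<longleftrightarrow> even (card {s\<in>S. s < v})) \<longleftrightarrow> even (card {w\<in>F. w < v}))"
    unfolding F(1) by (rule even_card_greater_insert_iff[OF F(6) \<open>even (card F)\<close> F(5,3) \<open>a \<noteq> v\<close>])
  moreover have "even (card {w\<in>insert v F. b < w}) \<longleftrightarrow>
      ((even (card {s\<in>R. s < b}) \<longleftrightarrow> even (card {s\<in>R. s < v})) \<longleftrightarrow> even (card {w\<in>F. w < v}))"
    unfolding F(2) by (rule even_card_greater_insert_iff[OF F(6) \<open>even (card F)\<close> F(5,4) \<open>b \<noteq> v\<close>])
  ultimately show ?thesis using opposite by blast
qed

theorem lemma4p13:
  fixes t :: "nat \<Rightarrow> real" and m d v :: nat and T :: "nat set set" and S R :: "nat set"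
  assumes "CARD('n::{finite,linorder}) = 2 * d + 1"
    and "strict_mono_on {1..m} t"
    and "cyclic_triangulation TYPE('n) t m T"
    and "v \<in> {1..m}"
    and "S \<in> tri_del T v" and "R \<in> tri_del T v"
    and "card (S \<inter> R) = 2 * d"
  shows "\<not> (lower_facet m d v S (S \<inter> R) \<and> lower_facet m d v R (S \<inter> R))
       \<and> \<not> (upper_facet m d v S (S \<inter> R) \<and> upper_facet m d v R (S \<inter> R))"
proof (intro conjI notI; elim conjE)
  have "1 \<le> v" using assms(4) by simp
  note S = tri_del_simplex[OF assms(3,5)] and R = tri_del_simplex[OF assms(3,6)]
  note parity = tri_del_common_facet_parity[OF assms(1-3,5-7)]
  show False if lower: "lower_facet m d v S (S \<inter> R)" "lower_facet m d v R (S \<inter> R)"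
  proof -
    obtain a b where a: "a \<in> S_plus m d v S" "S \<inter> R = S - {a}"
      and b: "b \<in> S_plus m d v R" "S \<inter> R = R - {b}"
      using lower unfolding lower_facet_def by blast
    moreover have "a \<in> S" "b \<in> R" using a(1) b(1) unfolding S_plus_def by blast+
    ultimately show False
      using parity[OF _ a(2) _ b(2)] S_plus_parity[OF a(1) S(3,2) \<open>1 \<le> v\<close>]
        S_plus_parity[OF b(1) R(3,2) \<open>1 \<le> v\<close>] by blast
  qed
  show False if upper: "upper_facet m d v S (S \<inter> R)" "upper_facet m d v R (S \<inter> R)"
  proof -
    obtain a b where a: "a \<in> S_minus m d v S" "S \<inter> R = S - {a}"
      and b: "b \<in> S_minus m d v R" "S \<inter> R = R - {b}"
      using upper unfolding upper_facet_def by blast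
    moreover have "a \<in> S" "b \<in> R" using a(1) b(1) unfolding S_minus_def by blast+
    ultimately show False
      using parity[OF _ a(2) _ b(2)] S_minus_parity[OF a(1) S(3,2) \<open>1 \<le> v\<close>]
        S_minus_parity[OF b(1) R(3,2) \<open>1 \<le> v\<close>] by blast
  qed
qed

end
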